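(* Let $C,D$ be simple $k$-string diagrams. Then $\pi(C)=\pi(D)$ if and only if $\ell_i(C)=\ell_i(D)$ for all $i$ and there exist permutations $\sigma_i\in\Sigma_{\ell_i(D)}$ ($1\le i\le k$; with $\sigma_0=\mathrm{id}_{\langle1\rangle}$), each order preserving on the fibres of $v^i(D)$ (i.e. $a<b$ and $v^i(D)(a)=v^i(D)(b)$ imply $\sigma_i(a)<\sigma_i(b)$), such that $v^i(C)=\sigma_{i-1}\circ v^i(D)\circ\sigma_i^{-1}$ for all $i$.
   Context: Write $\langle\ell\rangle=\{1<\dots<\ell\}$. A simple $k$-string diagram $D$ consists of natural numbers $\ell_0(D)=1,\ell_1(D),\dots,\ell_k(D)$ and arbitrary functions $v^i(D)\colon\langle\ell_i(D)\rangle\to\langle\ell_{i-1}(D)\rangle$; a globular $k$-pasting diagram is the same data with all $v^i$ order preserving. For a simple $k$-string diagram $D$ define orders $\overline{D}_i$ on the sets $\langle\ell_i(D)\rangle$ inductively: $\overline{D}_1=\langle\ell_1\rangle$ with its usual order, and $\overline{D}_{i+1}$ is the unique total order making $v^{i+1}\times\mathrm{id}\colon\overline{D}_{i+1}\to\overline{D}_i\times\langle\ell_{i+1}\rangle$ order preserving, the target carrying the lexicographic order ($(a,b)\le(a',b')$ iff $a<a'$, or $a=a'$ and $b\le b'$). Then all $v^i$ are order preserving for the orders $\overline{D}_i$, and $\pi(D)$ is the unique globular $k$-pasting diagram isomorphic to $(\overline{D}_k\to\cdots\to\overline{D}_1\to\langle1\rangle)$ via levelwise order-preserving bijections commuting with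 the maps. *)

theory Defs
  imports "HOL-Combinatorics.Permutations"
begin

text \<open>A (k-string) diagram is given by the lengths l i (i = 0..k) and the maps
  v i : {1..l i} -> {1..l (i-1)} (i = 1..k).  Values outside these domains are irrelevant
  for the notion of diagram; they are normalised to 0 in the output of pi.\<close>

type_synonym diagram = "(nat \<Rightarrow> nat) \<times> (nat \<Rightarrow> nat \<Rightarrow> nat)"

definition ell :: "diagram \<Rightarrow> nat \<Rightarrow> nat" where "ell D = fst D"
definition vmap :: "diagram \<Rightarrow> nat \<Rightarrow> nat \<Rightarrow> nat" where "vmap D = snd D"

definition simple_diagram :: "nat \<Rightarrow> diagram \<Rightarrow> bool" where
  "simple_diagram k D \<longleftrightarrow> ell D 0 = 1 \<and>
     (\<forall>i\<in>{1..k}. \<forall>a\<in>{1..ell D i}. vmap D i a \<in> {1..ell D (i - 1)})"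

definition globular_diagram :: "nat \<Rightarrow> diagram \<Rightarrow> bool" where
  "globular_diagram k D \<longleftrightarrow> simple_diagram k D \<and>
     (\<forall>i\<in>{1..k}. \<forall>a\<in>{1..ell D i}. \<forall>b\<in>{1..ell D i}. a \<le> b \<longrightarrow> vmap D i a \<le> vmap D i b)"

definition normal_diagram :: "nat \<Rightarrow> diagram \<Rightarrow> bool" where
  "normal_diagram k D \<longleftrightarrow> (\<forall>i>k. ell D i = 0) \<and>
     (\<forall>i a. \<not> (1 \<le> i \<and> i \<le> k \<and> a \<in> {1..ell D i}) \<longrightarrow> vmap D i a = 0)"

text \<open>The strict version of the order \<open>D_i\<close> bar: level 0 is the one-point order,
  and a <_(i+1) b iff (v a, a) <_lex (v b, b) with respect to <_i on the first component
  (level 1 is then the usual order, since v^1 is constant).\<close>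
fun ord_lt :: "diagram \<Rightarrow> nat \<Rightarrow> nat \<Rightarrow> nat \<Rightarrow> bool" where
  "ord_lt D 0 a b = False"
| "ord_lt D (Suc i) a b \<longleftrightarrow> ord_lt D i (vmap D (Suc i) a) (vmap D (Suc i) b) \<or>
      (vmap D (Suc i) a = vmap D (Suc i) b \<and> a < b)"

text \<open>Isomorphism from (\<open>D_k\<close> bar -> ... -> \<open>D_1\<close> bar -> <1>) to E by levelwise
  order-preserving bijections commuting with the maps.\<close>
definition diagram_iso :: "nat \<Rightarrow> diagram \<Rightarrow> diagram \<Rightarrow> (nat \<Rightarrow> nat \<Rightarrow> nat) \<Rightarrow> bool" where
  "diagram_iso k D E f \<longleftrightarrow>
     (\<forall>i\<le>k. bij_betw (f i) {1..ell D i} {1..ell E i} \<and>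
        (\<forall>a\<in>{1..ell D i}. \<forall>b\<in>{1..ell D i}. ord_lt D i a b \<longleftrightarrow> f i a < f i b)) \<and>
     (\<forall>i\<in>{1..k}. \<forall>a\<in>{1..ell D i}. f (i - 1) (vmap D i a) = vmap E i (f i a))"

definition pi_diag :: "nat \<Rightarrow> diagram \<Rightarrow> diagram" where
  "pi_diag k D = (THE E. globular_diagram k E \<and> normal_diagram k E \<and> (\<exists>f. diagram_iso k D E f))"

end

theory Submission
  imports Defs
begin

(* Each level order of a simple diagram is a strict total order, and pi(D) is D relabelled
   levelwise by the rank functions of these orders: a levelwise bijection onto an initial
   segment {1..n} that turns an order into the order of the naturals must be the rank function,
   so pi(D) is unique, and pi(C) = pi(D) exactly when C and D are isomorphic as diagrams carrying
   their level orders.  The level orders are lexicographic, so a levelwise bijection commuting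
   with the maps preserves them if and only if, level by level, it is increasing on every fibre
   of the map to the level below. *)

section \<open>Ranks in finite strict total orders\<close>

definition order_rank :: "('a \<Rightarrow> 'a \<Rightarrow> bool) \<Rightarrow> 'a set \<Rightarrow> 'a \<Rightarrow> nat" where
  "order_rank R A a = card {b \<in> A. R b a} + 1"

context
  fixes R :: "'a \<Rightarrow> 'a \<Rightarrow> bool" and A :: "'a set"
  assumes finite: "finite A"
    and irrefl: "\<And>x. \<not> R x x"
    and trans: "\<And>x y z. R x y \<Longrightarrow> R y z \<Longrightarrow> R x z"
    and total: "\<And>x y. x \<in> A \<Longrightarrow> y \<in> A \<Longrightarrow> x \<noteq> y \<Longrightarrow> R x y \<or> R y x"
begin

lemma order_rank_less_iff:
  assumes "a \<in> A" "b \<in> A"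
  shows "order_rank R A a < order_rank R A b \<longleftrightarrow> R a b"
proof -
  have less: "order_rank R A x < order_rank R A y" if "x \<in> A" "R x y" for x y
  proof -
    have "{c \<in> A. R c x} \<subseteq> {c \<in> A. R c y}"
      using trans[of _ x y] \<open>R x y\<close> by blast
    moreover have "x \<in> {c \<in> A. R c y} - {c \<in> A. R c x}"
      using that irrefl[of x] by simp
    ultimately have "{c \<in> A. R c x} \<subset> {c \<in> A. R c y}"
      by blast
    then show ?thesis
      unfolding order_rank_def using finite by (simp add: psubset_card_mono)
  qed
  show ?thesis
    using less[of b a] less[of a b] total[of a b] assms by (cases "a = b") auto
qed

lemma bij_betw_order_rank: "bij_betw (order_rank R A) A {1..card A}"
proof -
  have inj: "inj_on (order_rank R A) A"
  proof (rule inj_onI, rule ccontr)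
    fix a b assume "a \<in> A" "b \<in> A" "order_rank R A a = order_rank R A b" "a \<noteq> b"
    then show False
      using total[of a b] order_rank_less_iff[of a b] order_rank_less_iff[of b a] by auto
  qed
  have "order_rank R A a \<le> card A" if "a \<in> A" for a
  proof -
    have "{b \<in> A. R b a} \<subseteq> A - {a}"
      using irrefl by auto
    then have "card {b \<in> A. R b a} \<le> card A - 1"
      using that finite by (metis card_Diff_singleton card_mono finite_Diff)
    moreover have "card A \<ge> 1"
      using that finite by (metis card_0_eq empty_iff less_one not_le)
    ultimately show ?thesis
      unfolding order_rank_def by simp
  qed
  then have "order_rank R A ` A \<subseteq> {1..card A}"
    unfolding order_rank_def by auto
  then have "order_rank R A ` A = {1..card A}"
    using inj finite by (intro card_subset_eq) (simp_all add: card_image)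
  with inj show ?thesis
    by (simp add: bij_betw_def)
qed

end

lemma order_rank_unique:
  assumes bij: "bij_betw f A {1..m}"
    and less_iff: "\<forall>a\<in>A. \<forall>b\<in>A. R a b \<longleftrightarrow> f a < f b" and "a \<in> A"
  shows "f a = order_rank R A a"
proof -
  have image: "f ` A = {1..m}" and inj: "inj_on f A"
    using bij by (auto simp: bij_betw_def)
  have "f a \<in> {1..m}"
    using image \<open>a \<in> A\<close> by blast
  have "card {b \<in> A. R b a} = card (f ` {b \<in> A. R b a})"
    using inj by (simp add: card_image inj_on_subset)
  also have "f ` {b \<in> A. R b a} = {b \<in> f ` A. b < f a}"
    using less_iff \<open>a \<in> A\<close> by auto
  also have "\<dots> = {1..<f a}"
    using image \<open>f a \<in> {1..m}\<close> by auto
  finally show ?thesis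
    using \<open>f a \<in> {1..m}\<close> unfolding order_rank_def by simp
qed

section \<open>The level orders\<close>

lemma ord_lt_irrefl: "\<not> ord_lt D i a a"
  by (induction i arbitrary: a) auto

lemma ord_lt_trans: "ord_lt D i a b \<Longrightarrow> ord_lt D i b c \<Longrightarrow> ord_lt D i a c"
  by (induction i arbitrary: a b c) auto

lemma simple_diagram_vmap_in:
  "simple_diagram k D \<Longrightarrow> i \<in> {1..k} \<Longrightarrow> a \<in> {1..ell D i} \<Longrightarrow> vmap D i a \<in> {1..ell D (i - 1)}"
  unfolding simple_diagram_def by blast

lemma ord_lt_total:
  assumes "simple_diagram k D" "i \<le> k" "a \<in> {1..ell D i}" "b \<in> {1..ell D i}" "a \<noteq> b"
  shows "ord_lt D i a b \<or> ord_lt D i b a"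
  using assms(2-)
proof (induction i arbitrary: a b)
  case 0
  then show ?case using assms(1) by (auto simp: simple_diagram_def)
next
  case (Suc j)
  have "vmap D (Suc j) a \<in> {1..ell D j}" "vmap D (Suc j) b \<in> {1..ell D j}"
    using simple_diagram_vmap_in[OF assms(1)] Suc.prems by fastforce+
  with Suc show ?case by (cases "vmap D (Suc j) a = vmap D (Suc j) b") auto
qed

lemma ord_lt_globular:
  assumes "globular_diagram k E" "i \<le> k" "a \<in> {1..ell E i}" "b \<in> {1..ell E i}"
  shows "ord_lt E i a b \<longleftrightarrow> a < b"
  using assms(2-)
proof (induction i arbitrary: a b)
  case (Suc j)
  have simple: "simple_diagram k E" and mono:
    "\<And>x y. x \<in> {1..ell E (Suc j)} \<Longrightarrow> y \<in> {1..ell E (Suc j)} \<Longrightarrow> x \<le> y \<Longrightarrow>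
       vmap E (Suc j) x \<le> vmap E (Suc j) y"
    using assms(1) Suc.prems(1) unfolding globular_diagram_def by auto
  have "vmap E (Suc j) a \<in> {1..ell E j}" "vmap E (Suc j) b \<in> {1..ell E j}"
    using simple_diagram_vmap_in[OF simple] Suc.prems by fastforce+
  with Suc.IH Suc.prems have "ord_lt E (Suc j) a b \<longleftrightarrow>
      vmap E (Suc j) a < vmap E (Suc j) b \<or> (vmap E (Suc j) a = vmap E (Suc j) b \<and> a < b)"
    by simp
  also have "\<dots> \<longleftrightarrow> a < b"
    using mono[of a b] mono[of b a] Suc.prems by (cases "a < b") auto
  finally show ?case .
qed (use assms(1) in \<open>simp add: globular_diagram_def simple_diagram_def\<close>)

section \<open>The normal form\<close>

abbreviation level_rank :: "diagram \<Rightarrow> nat \<Rightarrow> nat \<Rightarrow> nat" where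
  "level_rank D i \<equiv> order_rank (ord_lt D i) {1..ell D i}"

lemma
  assumes "simple_diagram k D" "i \<le> k"
  shows bij_betw_level_rank: "bij_betw (level_rank D i) {1..ell D i} {1..ell D i}"
    and level_rank_less_iff: "\<lbrakk>a \<in> {1..ell D i}; b \<in> {1..ell D i}\<rbrakk> \<Longrightarrow>
      level_rank D i a < level_rank D i b \<longleftrightarrow> ord_lt D i a b"
  using bij_betw_order_rank[of "{1..ell D i}" "ord_lt D i"]
    order_rank_less_iff[of "{1..ell D i}" "ord_lt D i"]
  by (simp_all add: ord_lt_irrefl ord_lt_trans ord_lt_total[OF assms])

definition rank_diagram :: "nat \<Rightarrow> diagram \<Rightarrow> diagram" where
  "rank_diagram k D =
    (\<lambda>i. if i \<le> k then ell D i else 0,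
     \<lambda>i c. if 1 \<le> i \<and> i \<le> k \<and> c \<in> {1..ell D i}
       then level_rank D (i - 1) (vmap D i (inv_into {1..ell D i} (level_rank D i) c)) else 0)"

lemma ell_rank_diagram: "ell (rank_diagram k D) i = (if i \<le> k then ell D i else 0)"
  by (simp add: rank_diagram_def ell_def)

lemma vmap_rank_diagram: "vmap (rank_diagram k D) i c =
    (if 1 \<le> i \<and> i \<le> k \<and> c \<in> {1..ell D i}
     then level_rank D (i - 1) (vmap D i (inv_into {1..ell D i} (level_rank D i) c)) else 0)"
  by (simp add: rank_diagram_def vmap_def)

lemma vmap_rank_diagram_level_rank:
  assumes "simple_diagram k D" "i \<in> {1..k}" "a \<in> {1..ell D i}"
  shows "vmap (rank_diagram k D) i (level_rank D i a) = level_rank D (i - 1) (vmap D i a)"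
proof -
  have bij: "bij_betw (level_rank D i) {1..ell D i} {1..ell D i}"
    using bij_betw_level_rank assms by simp
  then have "level_rank D i a \<in> {1..ell D i}"
    using assms(3) by (rule bij_betw_apply)
  moreover have "inv_into {1..ell D i} (level_rank D i) (level_rank D i a) = a"
    using bij_betw_imp_inj_on[OF bij] assms(3) by (rule inv_into_f_f)
  ultimately show ?thesis
    using assms(2) by (simp add: vmap_rank_diagram)
qed

lemma diagram_iso_rank_diagram:
  assumes "simple_diagram k D"
  shows "diagram_iso k D (rank_diagram k D) (level_rank D)"
  unfolding diagram_iso_def
  using bij_betw_level_rank[OF assms] level_rank_less_iff[OF assms]
    vmap_rank_diagram_level_rank[OF assms]
  by (simp add: ell_rank_diagram)

lemma rank_diagram_level_obtain:
  assumes "simple_diagram k D" "i \<le> k" "c \<in> {1..ell (rank_diagram k D) i}"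
  obtains a where "a \<in> {1..ell D i}" "c = level_rank D i a"
proof -
  have "c \<in> level_rank D i ` {1..ell D i}"
    using bij_betw_imp_surj_on[OF bij_betw_level_rank[OF assms(1,2)]] assms(2,3)
    by (simp add: ell_rank_diagram)
  then show ?thesis
    using that by blast
qed

lemma simple_rank_diagram:
  assumes simple: "simple_diagram k D"
  shows "simple_diagram k (rank_diagram k D)"
  unfolding simple_diagram_def
proof (intro conjI ballI)
  show "ell (rank_diagram k D) 0 = 1"
    using simple by (simp add: ell_rank_diagram simple_diagram_def)
next
  fix i c assume i: "i \<in> {1..k}" and "c \<in> {1..ell (rank_diagram k D) i}"
  then obtain a where a: "a \<in> {1..ell D i}" "c = level_rank D i a"
    using rank_diagram_level_obtain[OF simple] by auto
  have "vmap D i a \<in> {1..ell D (i - 1)}"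
    using simple i a(1) by (rule simple_diagram_vmap_in)
  then have "level_rank D (i - 1) (vmap D i a) \<in> {1..ell D (i - 1)}"
    using i by (intro bij_betw_apply[OF bij_betw_level_rank[OF simple]]) auto
  then show "vmap (rank_diagram k D) i c \<in> {1..ell (rank_diagram k D) (i - 1)}"
    using vmap_rank_diagram_level_rank[OF simple i a(1)] a(2) i by (auto simp: ell_rank_diagram)
qed

lemma globular_rank_diagram:
  assumes simple: "simple_diagram k D"
  shows "globular_diagram k (rank_diagram k D)"
  unfolding globular_diagram_def
proof (intro conjI ballI impI simple_rank_diagram[OF simple])
  fix i c d assume i: "i \<in> {1..k}" and c: "c \<in> {1..ell (rank_diagram k D) i}"
    and d: "d \<in> {1..ell (rank_diagram k D) i}" and "c \<le> d"
  obtain j where j: "i = Suc j" "j \<le> k"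
    using i by (cases i) auto
  have "i \<le> k"
    using i by simp
  obtain a where a: "a \<in> {1..ell D i}" "c = level_rank D i a"
    using rank_diagram_level_obtain[OF simple \<open>i \<le> k\<close> c] .
  obtain b where b: "b \<in> {1..ell D i}" "d = level_rank D i b"
    using rank_diagram_level_obtain[OF simple \<open>i \<le> k\<close> d] .
  have "\<not> ord_lt D i b a"
    using level_rank_less_iff[OF simple _ b(1) a(1)] \<open>c \<le> d\<close> a(2) b(2) i by auto
  then have "\<not> ord_lt D j (vmap D i b) (vmap D i a)"
    using j by auto
  moreover have "vmap D i a \<in> {1..ell D j}" "vmap D i b \<in> {1..ell D j}"
    using simple_diagram_vmap_in[OF simple i] a(1) b(1) j by auto
  ultimately have "level_rank D j (vmap D i a) \<le> level_rank D j (vmap D i b)"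
    using level_rank_less_iff[OF simple j(2)] by (meson not_less)
  then show "vmap (rank_diagram k D) i c \<le> vmap (rank_diagram k D) i d"
    using vmap_rank_diagram_level_rank[OF simple i] a b j by simp
qed

lemma normal_rank_diagram: "normal_diagram k (rank_diagram k D)"
  unfolding normal_diagram_def by (auto simp: ell_rank_diagram vmap_rank_diagram)

lemma diagram_iso_eq_level_rank:
  assumes "diagram_iso k D E f" "i \<le> k" "a \<in> {1..ell D i}"
  shows "f i a = level_rank D i a"
  using assms by (intro order_rank_unique[of "f i" _ "ell E i"]) (auto simp: diagram_iso_def)

lemma diagram_iso_ell: "diagram_iso k D E f \<Longrightarrow> i \<le> k \<Longrightarrow> ell E i = ell D i"
  unfolding diagram_iso_def using bij_betw_same_card by fastforce

lemma diagram_iso_target_unique: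
  assumes simple: "simple_diagram k D"
    and iso1: "diagram_iso k D E1 f1" and iso2: "diagram_iso k D E2 f2"
    and normal1: "normal_diagram k E1" and normal2: "normal_diagram k E2"
  shows "E1 = E2"
proof -
  have f_eq: "f1 i a = f2 i a" if "i \<le> k" "a \<in> {1..ell D i}" for i a
    using diagram_iso_eq_level_rank[OF iso1 that] diagram_iso_eq_level_rank[OF iso2 that] by simp
  have ell_eq: "ell E1 i = ell E2 i" for i
  proof (cases "i \<le> k")
    case True
    then show ?thesis
      using diagram_iso_ell[OF iso1] diagram_iso_ell[OF iso2] by simp
  next
    case False
    then show ?thesis
      using normal1 normal2 by (simp add: normal_diagram_def)
  qed
  have vmap_eq: "vmap E1 i c = vmap E2 i c" for i c
  proof (cases "1 \<le> i \<and> i \<le> k \<and> c \<in> {1..ell E1 i}")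
    case True
    then have i: "i \<in> {1..k}" and "c \<in> f1 i ` {1..ell D i}"
      using iso1 by (auto simp: diagram_iso_def bij_betw_def)
    then obtain a where a: "a \<in> {1..ell D i}" "c = f1 i a"
      by blast
    have "vmap D i a \<in> {1..ell D (i - 1)}"
      using simple i a(1) by (rule simple_diagram_vmap_in)
    have "vmap E1 i c = f1 (i - 1) (vmap D i a)"
      using iso1 i a unfolding diagram_iso_def by auto
    also have "\<dots> = f2 (i - 1) (vmap D i a)"
      using i \<open>vmap D i a \<in> {1..ell D (i - 1)}\<close> by (intro f_eq) auto
    also have "\<dots> = vmap E2 i (f2 i a)"
      using iso2 i a unfolding diagram_iso_def by auto
    finally show ?thesis
      using f_eq[of i a] a i by simp
  next
    case False
    then show ?thesis
      using normal1 normal2 ell_eq[of i] by (auto simp: normal_diagram_def)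
  qed
  show ?thesis
    using ell_eq vmap_eq unfolding ell_def vmap_def by (simp add: prod_eq_iff fun_eq_iff)
qed

lemma pi_diag_eqI:
  assumes "simple_diagram k D" "globular_diagram k E" "normal_diagram k E" "diagram_iso k D E f"
  shows "pi_diag k D = E"
  unfolding pi_diag_def
  using assms diagram_iso_target_unique by (intro the_equality) blast+

lemma pi_diag_eq_rank_diagram: "simple_diagram k D \<Longrightarrow> pi_diag k D = rank_diagram k D"
  by (rule pi_diag_eqI[OF _ globular_rank_diagram normal_rank_diagram diagram_iso_rank_diagram])

section \<open>Order isomorphisms of diagrams\<close>

definition diagram_bij :: "nat \<Rightarrow> diagram \<Rightarrow> diagram \<Rightarrow> (nat \<Rightarrow> nat \<Rightarrow> nat) \<Rightarrow> bool" where
  "diagram_bij k D C \<sigma> \<longleftrightarrow>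
     (\<forall>i\<le>k. bij_betw (\<sigma> i) {1..ell D i} {1..ell C i}) \<and>
     (\<forall>i\<in>{1..k}. \<forall>a\<in>{1..ell D i}. \<sigma> (i - 1) (vmap D i a) = vmap C i (\<sigma> i a))"

definition diagram_order_iso :: "nat \<Rightarrow> diagram \<Rightarrow> diagram \<Rightarrow> (nat \<Rightarrow> nat \<Rightarrow> nat) \<Rightarrow> bool" where
  "diagram_order_iso k D C \<sigma> \<longleftrightarrow> diagram_bij k D C \<sigma> \<and>
     (\<forall>i\<le>k. \<forall>a\<in>{1..ell D i}. \<forall>b\<in>{1..ell D i}. ord_lt C i (\<sigma> i a) (\<sigma> i b) \<longleftrightarrow> ord_lt D i a b)"

lemma diagram_bijD:
  assumes "diagram_bij k D C \<sigma>"
  shows diagram_bij_bij_betw: "i \<le> k \<Longrightarrow> bij_betw (\<sigma> i) {1..ell D i} {1..ell C i}"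
    and diagram_bij_apply: "i \<le> k \<Longrightarrow> a \<in> {1..ell D i} \<Longrightarrow> \<sigma> i a \<in> {1..ell C i}"
    and diagram_bij_vmap:
      "i \<in> {1..k} \<Longrightarrow> a \<in> {1..ell D i} \<Longrightarrow> \<sigma> (i - 1) (vmap D i a) = vmap C i (\<sigma> i a)"
  using assms unfolding diagram_bij_def by (blast intro: bij_betw_apply)+

lemma diagram_bij_ell:
  assumes "diagram_bij k D C \<sigma>" "i \<le> k"
  shows "ell C i = ell D i"
  using bij_betw_same_card[OF diagram_bij_bij_betw[OF assms]] by simp

lemma diagram_order_isoD:
  assumes "diagram_order_iso k D C \<sigma>"
  shows diagram_order_iso_bij: "diagram_bij k D C \<sigma>"
    and diagram_order_iso_ord_lt: "i \<le> k \<Longrightarrow> a \<in> {1..ell D i} \<Longrightarrow> b \<in> {1..ell D i} \<Longrightarrow>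
      ord_lt C i (\<sigma> i a) (\<sigma> i b) \<longleftrightarrow> ord_lt D i a b"
  using assms unfolding diagram_order_iso_def by blast+

lemma diagram_iso_iff_order_iso:
  assumes "globular_diagram k E"
  shows "diagram_iso k D E f \<longleftrightarrow> diagram_order_iso k D E f"
proof -
  have "(\<forall>a\<in>{1..ell D i}. \<forall>b\<in>{1..ell D i}. ord_lt D i a b \<longleftrightarrow> f i a < f i b) \<longleftrightarrow>
      (\<forall>a\<in>{1..ell D i}. \<forall>b\<in>{1..ell D i}. ord_lt E i (f i a) (f i b) \<longleftrightarrow> ord_lt D i a b)"
    if "i \<le> k" "bij_betw (f i) {1..ell D i} {1..ell E i}" for i
    using ord_lt_globular[OF assms that(1) bij_betw_apply[OF that(2)] bij_betw_apply[OF that(2)]]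
    by auto
  then show ?thesis
    unfolding diagram_iso_def diagram_order_iso_def diagram_bij_def by blast
qed

lemma diagram_order_iso_comp:
  assumes \<sigma>: "diagram_order_iso k D C \<sigma>" and \<tau>: "diagram_order_iso k C E \<tau>"
  shows "diagram_order_iso k D E (\<lambda>i. \<tau> i \<circ> \<sigma> i)"
proof -
  note \<sigma>_bij = diagram_order_iso_bij[OF \<sigma>] and \<tau>_bij = diagram_order_iso_bij[OF \<tau>]
  show ?thesis
    unfolding diagram_order_iso_def diagram_bij_def
  proof (intro conjI allI impI ballI)
    fix i assume i: "i \<le> k"
    show "bij_betw (\<tau> i \<circ> \<sigma> i) {1..ell D i} {1..ell E i}"
      using diagram_bij_bij_betw[OF \<sigma>_bij i] diagram_bij_bij_betw[OF \<tau>_bij i] by (rule bij_betw_trans)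
    fix a b assume a: "a \<in> {1..ell D i}" and b: "b \<in> {1..ell D i}"
    show "ord_lt E i ((\<tau> i \<circ> \<sigma> i) a) ((\<tau> i \<circ> \<sigma> i) b) \<longleftrightarrow> ord_lt D i a b"
      using diagram_order_iso_ord_lt[OF \<tau> i diagram_bij_apply[OF \<sigma>_bij i a]
          diagram_bij_apply[OF \<sigma>_bij i b]]
        diagram_order_iso_ord_lt[OF \<sigma> i a b]
      by simp
  next
    fix i a assume i: "i \<in> {1..k}" and a: "a \<in> {1..ell D i}"
    have "\<sigma> i a \<in> {1..ell C i}"
      using i a by (intro diagram_bij_apply[OF \<sigma>_bij]) auto
    then show "(\<tau> (i - 1) \<circ> \<sigma> (i - 1)) (vmap D i a) = vmap E i ((\<tau> i \<circ> \<sigma> i) a)"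
      using diagram_bij_vmap[OF \<sigma>_bij i a] diagram_bij_vmap[OF \<tau>_bij i] by simp
  qed
qed

lemma diagram_order_iso_inv:
  assumes simple: "simple_diagram k D" and \<sigma>: "diagram_order_iso k D C \<sigma>"
  shows "diagram_order_iso k C D (\<lambda>i. inv_into {1..ell D i} (\<sigma> i))"
proof -
  note bij = diagram_bij_bij_betw[OF diagram_order_iso_bij[OF \<sigma>]]
  have inv_in: "inv_into {1..ell D i} (\<sigma> i) c \<in> {1..ell D i}"
    and f_inv: "\<sigma> i (inv_into {1..ell D i} (\<sigma> i) c) = c"
    if "i \<le> k" "c \<in> {1..ell C i}" for i c
    using bij_betw_apply[OF bij_betw_inv_into[OF bij[OF that(1)]] that(2)]
      bij_betw_inv_into_right[OF bij[OF that(1)] that(2)]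
    by simp_all
  show ?thesis
    unfolding diagram_order_iso_def diagram_bij_def
  proof (intro conjI allI impI ballI)
    fix i assume i: "i \<le> k"
    show "bij_betw (inv_into {1..ell D i} (\<sigma> i)) {1..ell C i} {1..ell D i}"
      using bij[OF i] by (rule bij_betw_inv_into)
    fix c d assume c: "c \<in> {1..ell C i}" and d: "d \<in> {1..ell C i}"
    show "ord_lt D i (inv_into {1..ell D i} (\<sigma> i) c) (inv_into {1..ell D i} (\<sigma> i) d)
        \<longleftrightarrow> ord_lt C i c d"
      using diagram_order_iso_ord_lt[OF \<sigma> i inv_in[OF i c] inv_in[OF i d]] f_inv[OF i c] f_inv[OF i d]
      by simp
  next
    fix i c assume i: "i \<in> {1..k}" and c: "c \<in> {1..ell C i}"
    define a where "a = inv_into {1..ell D i} (\<sigma> i) c"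
    have "i \<le> k" "i - 1 \<le> k"
      using i by auto
    then have a: "a \<in> {1..ell D i}" "\<sigma> i a = c"
      unfolding a_def using inv_in f_inv c by auto
    have "vmap D i a \<in> {1..ell D (i - 1)}"
      using simple i a(1) by (rule simple_diagram_vmap_in)
    then have "inv_into {1..ell D (i - 1)} (\<sigma> (i - 1)) (\<sigma> (i - 1) (vmap D i a)) = vmap D i a"
      by (rule bij_betw_inv_into_left[OF bij[OF \<open>i - 1 \<le> k\<close>]])
    then show "inv_into {1..ell D (i - 1)} (\<sigma> (i - 1)) (vmap C i c) =
        vmap D i (inv_into {1..ell D i} (\<sigma> i) c)"
      using diagram_bij_vmap[OF diagram_order_iso_bij[OF \<sigma>] i a(1)] a(2) unfolding a_def by simp
  qed
qed

lemma diagram_order_iso_rank_diagram: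
  "simple_diagram k D \<Longrightarrow> diagram_order_iso k D (rank_diagram k D) (level_rank D)"
  using diagram_iso_rank_diagram globular_rank_diagram by (simp add: diagram_iso_iff_order_iso)

lemma pi_diag_eq_iff_order_iso:
  assumes simple_C: "simple_diagram k C" and simple_D: "simple_diagram k D"
  shows "pi_diag k C = pi_diag k D \<longleftrightarrow> (\<exists>\<sigma>. diagram_order_iso k D C \<sigma>)"
proof
  assume "pi_diag k C = pi_diag k D"
  then have "diagram_order_iso k D (rank_diagram k C) (level_rank D)"
    using diagram_order_iso_rank_diagram[OF simple_D] simple_C simple_D
    by (simp add: pi_diag_eq_rank_diagram)
  then show "\<exists>\<sigma>. diagram_order_iso k D C \<sigma>"
    using diagram_order_iso_comp
      diagram_order_iso_inv[OF simple_C diagram_order_iso_rank_diagram[OF simple_C]]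
    by blast
next
  assume "\<exists>\<sigma>. diagram_order_iso k D C \<sigma>"
  then obtain \<sigma> where "diagram_order_iso k D C \<sigma>" ..
  then have "diagram_iso k D (rank_diagram k C) (\<lambda>i. level_rank C i \<circ> \<sigma> i)"
    using diagram_order_iso_comp[OF _ diagram_order_iso_rank_diagram[OF simple_C]]
      globular_rank_diagram[OF simple_C]
    by (simp add: diagram_iso_iff_order_iso)
  then show "pi_diag k C = pi_diag k D"
    using pi_diag_eqI[OF simple_D globular_rank_diagram normal_rank_diagram] simple_C
    by (simp add: pi_diag_eq_rank_diagram)
qed

section \<open>Fibrewise monotone relabellings\<close>

definition fibrewise_mono :: "diagram \<Rightarrow> nat \<Rightarrow> (nat \<Rightarrow> nat) \<Rightarrow> bool" where
  "fibrewise_mono D i s \<longleftrightarrow>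
     (\<forall>a\<in>{1..ell D i}. \<forall>b\<in>{1..ell D i}. a < b \<and> vmap D i a = vmap D i b \<longrightarrow> s a < s b)"

lemma fibrewise_mono_less_iff:
  assumes "fibrewise_mono D i s" "inj_on s {1..ell D i}"
    and "a \<in> {1..ell D i}" "b \<in> {1..ell D i}" "vmap D i a = vmap D i b"
  shows "s a < s b \<longleftrightarrow> a < b"
  using assms unfolding fibrewise_mono_def by (metis less_asym linorder_neqE_nat)

lemma diagram_order_iso_iff_fibrewise_mono:
  assumes simple: "simple_diagram k D" and bij: "diagram_bij k D C \<sigma>"
  shows "diagram_order_iso k D C \<sigma> \<longleftrightarrow> (\<forall>i\<in>{1..k}. fibrewise_mono D i (\<sigma> i))"
proof
  assume iso: "diagram_order_iso k D C \<sigma>"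
  show "\<forall>i\<in>{1..k}. fibrewise_mono D i (\<sigma> i)"
    unfolding fibrewise_mono_def
  proof (intro ballI impI)
    fix i a b assume i: "i \<in> {1..k}" and a: "a \<in> {1..ell D i}" and b: "b \<in> {1..ell D i}"
      and ab: "a < b \<and> vmap D i a = vmap D i b"
    obtain j where j: "i = Suc j"
      using i by (cases i) auto
    have "ord_lt C i (\<sigma> i a) (\<sigma> i b)"
      using diagram_order_iso_ord_lt[OF iso _ a b] i ab j by simp
    moreover have "vmap C i (\<sigma> i a) = vmap C i (\<sigma> i b)"
      using diagram_bij_vmap[OF bij i a] diagram_bij_vmap[OF bij i b] ab by simp
    ultimately show "\<sigma> i a < \<sigma> i b"
      using j ord_lt_irrefl by auto
  qed
next
  assume mono: "\<forall>i\<in>{1..k}. fibrewise_mono D i (\<sigma> i)"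
  have "ord_lt C i (\<sigma> i a) (\<sigma> i b) \<longleftrightarrow> ord_lt D i a b"
    if "i \<le> k" "a \<in> {1..ell D i}" "b \<in> {1..ell D i}" for i a b
    using that
  proof (induction i arbitrary: a b)
    case (Suc j)
    let ?v = "vmap D (Suc j)"
    have i: "Suc j \<in> {1..k}" "j \<le> k"
      using Suc.prems by auto
    have va: "?v a \<in> {1..ell D j}" and vb: "?v b \<in> {1..ell D j}"
      using simple_diagram_vmap_in[OF simple i(1)] Suc.prems by fastforce+
    have inj: "inj_on (\<sigma> j) {1..ell D j}" "inj_on (\<sigma> (Suc j)) {1..ell D (Suc j)}"
      using bij_betw_imp_inj_on[OF diagram_bij_bij_betw[OF bij]] Suc.prems i by auto
    have "ord_lt C (Suc j) (\<sigma> (Suc j) a) (\<sigma> (Suc j) b) \<longleftrightarrow>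
        ord_lt C j (\<sigma> j (?v a)) (\<sigma> j (?v b)) \<or>
        (\<sigma> j (?v a) = \<sigma> j (?v b) \<and> \<sigma> (Suc j) a < \<sigma> (Suc j) b)"
      using diagram_bij_vmap[OF bij i(1)] Suc.prems by simp
    also have "\<dots> \<longleftrightarrow> ord_lt D j (?v a) (?v b) \<or> (?v a = ?v b \<and> a < b)"
      using Suc.IH[OF i(2) va vb] inj_on_eq_iff[OF inj(1) va vb]
        fibrewise_mono_less_iff[OF mono[rule_format, OF i(1)] inj(2)] Suc.prems
      by auto
    finally show ?case
      by simp
  qed simp
  with bij show "diagram_order_iso k D C \<sigma>"
    unfolding diagram_order_iso_def by blast
qed

lemma diagram_bij_iff_permutations:
  assumes id: "\<sigma> 0 = id" and perm: "\<forall>i\<in>{1..k}. \<sigma> i permutes {1..ell D i}"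
  shows "diagram_bij k D C \<sigma> \<longleftrightarrow> (\<forall>i\<le>k. ell C i = ell D i) \<and>
    (\<forall>i\<in>{1..k}. \<forall>a\<in>{1..ell D i}. vmap C i a = (\<sigma> (i - 1) \<circ> vmap D i \<circ> inv (\<sigma> i)) a)"
    (is "_ \<longleftrightarrow> ?rhs")
proof
  assume bij: "diagram_bij k D C \<sigma>"
  have "vmap C i a = \<sigma> (i - 1) (vmap D i (inv (\<sigma> i) a))"
    if i: "i \<in> {1..k}" and a: "a \<in> {1..ell D i}" for i a
  proof -
    have "inv (\<sigma> i) a \<in> {1..ell D i}"
      using permutes_in_image[OF permutes_inv[OF perm[rule_format, OF i]]] a by simp
    then show ?thesis
      using diagram_bij_vmap[OF bij i] permutes_inverses(1)[OF perm[rule_format, OF i]] by metis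
  qed
  then show ?rhs
    using diagram_bij_ell[OF bij] by simp
next
  assume ?rhs
  then have ell: "\<forall>i\<le>k. ell C i = ell D i"
    and vmap: "\<forall>i\<in>{1..k}. \<forall>a\<in>{1..ell D i}. vmap C i a = \<sigma> (i - 1) (vmap D i (inv (\<sigma> i) a))"
    by auto
  have perm0: "\<sigma> i permutes {1..ell D i}" if "i \<le> k" for i
    using perm id that permutes_id by (cases "i = 0") auto
  show "diagram_bij k D C \<sigma>"
    unfolding diagram_bij_def
  proof (intro conjI allI impI ballI)
    fix i assume "i \<le> k"
    then show "bij_betw (\<sigma> i) {1..ell D i} {1..ell C i}"
      using ell permutes_imp_bij[OF perm0] by simp
  next
    fix i a assume i: "i \<in> {1..k}" and a: "a \<in> {1..ell D i}"
    have "\<sigma> i a \<in> {1..ell D i}"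
      using permutes_in_image[OF perm[rule_format, OF i]] a by simp
    then show "\<sigma> (i - 1) (vmap D i a) = vmap C i (\<sigma> i a)"
      using vmap i permutes_inverses(2)[OF perm[rule_format, OF i]] by simp
  qed
qed

lemma diagram_order_iso_extend_permutes:
  assumes simple: "simple_diagram k D" and iso: "diagram_order_iso k D C \<sigma>"
  shows "\<exists>\<tau>. \<tau> 0 = id \<and> (\<forall>i\<in>{1..k}. \<tau> i permutes {1..ell D i}) \<and> diagram_order_iso k D C \<tau>"
proof -
  note bij = diagram_order_iso_bij[OF iso]
  define \<tau> where "\<tau> i a = (if a \<in> {1..ell D i} then \<sigma> i a else a)" for i a
  have bij_\<tau>: "bij_betw (\<tau> i) {1..ell D i} {1..ell C i}" if "i \<le> k" for i
    using diagram_bij_bij_betw[OF bij that] by (rule bij_betw_cong[THEN iffD1, rotated]) (simp add: \<tau>_def)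
  have "\<tau> i permutes {1..ell D i}" if "i \<le> k" for i
    using bij_\<tau>[OF that] diagram_bij_ell[OF bij that] by (intro bij_imp_permutes) (auto simp: \<tau>_def)
  moreover have "\<tau> 0 = id"
  proof
    fix a
    have "ell D 0 = 1" "ell C 0 = 1"
      using simple diagram_bij_ell[OF bij, of 0] by (simp_all add: simple_diagram_def)
    then show "\<tau> 0 a = id a"
      using diagram_bij_apply[OF bij, of 0 1] by (simp add: \<tau>_def)
  qed
  moreover have "diagram_order_iso k D C \<tau>"
    unfolding diagram_order_iso_def diagram_bij_def
  proof (intro conjI allI impI ballI)
    fix i assume i: "i \<le> k"
    then show "bij_betw (\<tau> i) {1..ell D i} {1..ell C i}"
      by (rule bij_\<tau>)
    fix a b assume "a \<in> {1..ell D i}" "b \<in> {1..ell D i}"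
    then show "ord_lt C i (\<tau> i a) (\<tau> i b) \<longleftrightarrow> ord_lt D i a b"
      using diagram_order_iso_ord_lt[OF iso i] by (simp add: \<tau>_def)
  next
    fix i a assume i: "i \<in> {1..k}" and a: "a \<in> {1..ell D i}"
    then have "vmap D i a \<in> {1..ell D (i - 1)}"
      by (rule simple_diagram_vmap_in[OF simple])
    then show "\<tau> (i - 1) (vmap D i a) = vmap C i (\<tau> i a)"
      using diagram_bij_vmap[OF bij i a] a by (simp add: \<tau>_def)
  qed
  ultimately show ?thesis
    by auto
qed

lemma ex_diagram_order_iso_iff_permutations:
  assumes simple: "simple_diagram k D"
  shows "(\<exists>\<sigma>. diagram_order_iso k D C \<sigma>) \<longleftrightarrow> (\<forall>i\<le>k. ell C i = ell D i) \<and>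
    (\<exists>\<sigma>. \<sigma> 0 = id \<and> (\<forall>i\<in>{1..k}. \<sigma> i permutes {1..ell D i} \<and> fibrewise_mono D i (\<sigma> i)) \<and>
      (\<forall>i\<in>{1..k}. \<forall>a\<in>{1..ell D i}. vmap C i a = (\<sigma> (i - 1) \<circ> vmap D i \<circ> inv (\<sigma> i)) a))"
proof -
  have "(\<exists>\<sigma>. diagram_order_iso k D C \<sigma>) \<longleftrightarrow>
      (\<exists>\<sigma>. \<sigma> 0 = id \<and> (\<forall>i\<in>{1..k}. \<sigma> i permutes {1..ell D i}) \<and> diagram_order_iso k D C \<sigma>)"
    using diagram_order_iso_extend_permutes[OF simple] by blast
  also have "\<dots> \<longleftrightarrow> (\<exists>\<sigma>. \<sigma> 0 = id \<and> (\<forall>i\<in>{1..k}. \<sigma> i permutes {1..ell D i}) \<and>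
      diagram_bij k D C \<sigma> \<and> (\<forall>i\<in>{1..k}. fibrewise_mono D i (\<sigma> i)))"
    using diagram_order_iso_iff_fibrewise_mono[OF simple] diagram_order_iso_bij by blast
  also have "\<dots> \<longleftrightarrow> (\<forall>i\<le>k. ell C i = ell D i) \<and>
      (\<exists>\<sigma>. \<sigma> 0 = id \<and> (\<forall>i\<in>{1..k}. \<sigma> i permutes {1..ell D i} \<and> fibrewise_mono D i (\<sigma> i)) \<and>
        (\<forall>i\<in>{1..k}. \<forall>a\<in>{1..ell D i}. vmap C i a = (\<sigma> (i - 1) \<circ> vmap D i \<circ> inv (\<sigma> i)) a))"
    (is "?lhs \<longleftrightarrow> ?rhs")
  proof
    assume ?lhs
    then obtain \<sigma> where "\<sigma> 0 = id" "\<forall>i\<in>{1..k}. \<sigma> i permutes {1..ell D i}"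
      "diagram_bij k D C \<sigma>" "\<forall>i\<in>{1..k}. fibrewise_mono D i (\<sigma> i)"
      by blast
    then show ?rhs
      using diagram_bij_iff_permutations[of \<sigma>] by blast
  next
    assume ?rhs
    then obtain \<sigma> where "\<forall>i\<le>k. ell C i = ell D i" "\<sigma> 0 = id"
      "\<forall>i\<in>{1..k}. \<sigma> i permutes {1..ell D i} \<and> fibrewise_mono D i (\<sigma> i)"
      "\<forall>i\<in>{1..k}. \<forall>a\<in>{1..ell D i}. vmap C i a = (\<sigma> (i - 1) \<circ> vmap D i \<circ> inv (\<sigma> i)) a"
      by blast
    then show ?lhs
      using diagram_bij_iff_permutations[of \<sigma>] by blast
  qed
  finally show ?thesis .
qed

theorem mainTheorem5:
  fixes k :: nat and C D :: diagram
  assumes "simple_diagram k C" and "simple_diagram k D"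
  shows "pi_diag k C = pi_diag k D \<longleftrightarrow>
    ((\<forall>i\<le>k. ell C i = ell D i) \<and>
     (\<exists>\<sigma> :: nat \<Rightarrow> nat \<Rightarrow> nat. \<sigma> 0 = id \<and>
        (\<forall>i\<in>{1..k}. \<sigma> i permutes {1..ell D i} \<and>
           (\<forall>a\<in>{1..ell D i}. \<forall>b\<in>{1..ell D i}.
              a < b \<and> vmap D i a = vmap D i b \<longrightarrow> \<sigma> i a < \<sigma> i b)) \<and>
        (\<forall>i\<in>{1..k}. \<forall>a\<in>{1..ell D i}.
           vmap C i a = (\<sigma> (i - 1) \<circ> vmap D i \<circ> inv (\<sigma> i)) a)))"
  unfolding pi_diag_eq_iff_order_iso[OF assms] ex_diagram_order_iso_iff_permutations[OF assms(2)]
    fibrewise_mono_def ..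

end
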